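(* Let $f_R:\mathbb{R}\to\mathbb{R}$ be the ReLU function, $f_R(t)=\max\{0,t\}$. Let $m\ge 1$ and let $\mathrm{Con}=(\mathrm{Con}_1,\dots,\mathrm{Con}_m)\in\mathbb{R}^m$ be arbitrary. For each $i\in\{1,\dots,m\}$ let $v_{i1},v_{i2}\in\mathbb{R}$ satisfy $v_{i1}v_{i2}=1$, and define the polar indicator pair $$(\mathrm{ID}_{1}(i),\mathrm{ID}_{2}(i))=\begin{cases}(0,\;v_{i2}) & \text{if } v_{i1}>0,\\ (v_{i2},\;-v_{i2}) & \text{if } v_{i1}<0.\end{cases}$$ Let $y\in\mathbb{R}^m$ be given by $y(i)=v_{i1}\,\mathrm{Con}_i$. Then for every $i$, $$\mathrm{ID}_1(i)\,y(i)+\mathrm{ID}_2(i)\,f_R(y(i)) = f_R(\mathrm{Con}_i).$$ Consequently, if $[\cdot]_{\mathcal S}$ denotes encryption under an additively homomorphic packed encryption scheme supporting slot-wise addition of ciphertexts and slot-wise multiplication of a ciphertext by a plaintext vector, then $\mathrm{Add}(\mathrm{Mult}([\mathrm{ID}_1]_{\mathcal S},y),\mathrm{Mult}([\mathrm{ID}_2]_{\mathcal S},f_R(y)))$ (with $f_R$ applied componentwise) is an encryption of the vector $(f_R(\mathrm{Con}_1),\dots,f_R(\mathrm{Con}_m))$.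
   Context: Setting: privacy-preserving neural network inference between a client $\mathcal C$ and a server $\mathcal S$. $\mathrm{Con}_i$ is the true (hidden) $i$-th output of a linear layer (convolution or dot product); the client only learns $y(i)=v_{i1}\mathrm{Con}_i$, where the random blinding factors $v_{i1}$ (and their inverses $v_{i2}$) are chosen by the server. $\mathrm{ID}_1=(\mathrm{ID}_1(1),\dots,\mathrm{ID}_1(m))$ and $\mathrm{ID}_2=(\mathrm{ID}_2(1),\dots,\mathrm{ID}_2(m))$ are packed and encrypted under the server's key, written $[\cdot]_{\mathcal S}$. $\mathrm{Add}([a],[b])$ is a ciphertext of the slot-wise sum $a+b$, and $\mathrm{Mult}([a],u)$ is a ciphertext of the slot-wise product $a\circ u$ for a plaintext vector $u$. Arithmetic is over the reals (real numbers are encoded into the plaintext space without overflow). *)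

theory Defs
  imports Main Complex_Main
begin

definition relu :: "real \<Rightarrow> real" where
  "relu t = max 0 t"

definition ID1 :: "real \<Rightarrow> real \<Rightarrow> real" where
  "ID1 v1 v2 = (if v1 > 0 then 0 else v2)"

definition ID2 :: "real \<Rightarrow> real \<Rightarrow> real" where
  "ID2 v1 v2 = (if v1 > 0 then v2 else - v2)"

end

theory Submission
  imports Defs
begin

text \<open>If v1 > 0 then so is v2 = 1/v1, and ReLU commutes with the positive scaling by v2.
  If v1 < 0, the decomposition t = relu t - relu (-t) turns v2 y - v2 relu y into
  (-v2) relu (-y), and the positive factor -v2 scales -y back to Con.\<close>

lemma relu_mult_pos:
  fixes c t :: real
  assumes "c > 0"
  shows "relu (c * t) = c * relu t"
  using assms by (simp add: relu_def max_mult_distrib_left)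

lemma relu_minus_relu_uminus: "relu t - relu (- t) = t"
  by (simp add: relu_def max_def)

lemma polar_indicator_relu:
  fixes a b c :: real
  assumes inverse: "a * b = 1"
  shows "ID1 a b * (a * c) + ID2 a b * relu (a * c) = relu c"
proof -
  have c_eq: "b * (a * c) = c"
    using inverse by (simp add: mult.assoc [symmetric] mult.commute)
  consider (pos) "a > 0" "b > 0" | (neg) "a < 0" "b < 0"
    using inverse zero_less_mult_iff [of a b] by (cases "a > 0") auto
  then show ?thesis
  proof cases
    case pos
    then have "ID1 a b * (a * c) + ID2 a b * relu (a * c) = relu (b * (a * c))"
      by (simp add: ID1_def ID2_def relu_mult_pos)
    then show ?thesis by (simp only: c_eq)
  next
    case neg
    then have "ID1 a b * (a * c) + ID2 a b * relu (a * c) = b * (a * c - relu (a * c))"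
      by (simp add: ID1_def ID2_def algebra_simps)
    also have "\<dots> = (- b) * relu (- (a * c))"
      using relu_minus_relu_uminus [of "a * c"] by (simp add: algebra_simps)
    also have "\<dots> = relu (b * (a * c))"
      using relu_mult_pos [of "- b" "- (a * c)"] \<open>b < 0\<close> by simp
    finally show ?thesis by (simp only: c_eq)
  qed
qed

theorem mainTheorem1:
  fixes m :: nat
    and Con v1 v2 y :: "nat \<Rightarrow> real"
    and dec :: "'c \<Rightarrow> nat \<Rightarrow> real"
    and Add :: "'c \<Rightarrow> 'c \<Rightarrow> 'c"
    and Mult :: "'c \<Rightarrow> (nat \<Rightarrow> real) \<Rightarrow> 'c"
    and cID1 cID2 :: 'c
  assumes "m \<ge> 1"
    and inv: "\<And>i. i \<in> {1..m} \<Longrightarrow> v1 i * v2 i = 1"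
    and ydef: "\<And>i. i \<in> {1..m} \<Longrightarrow> y i = v1 i * Con i"
    and add_hom: "\<And>a b i. i \<in> {1..m} \<Longrightarrow> dec (Add a b) i = dec a i + dec b i"
    and mult_hom: "\<And>a u i. i \<in> {1..m} \<Longrightarrow> dec (Mult a u) i = dec a i * u i"
    and enc1: "\<And>i. i \<in> {1..m} \<Longrightarrow> dec cID1 i = ID1 (v1 i) (v2 i)"
    and enc2: "\<And>i. i \<in> {1..m} \<Longrightarrow> dec cID2 i = ID2 (v1 i) (v2 i)"
  shows "(\<forall>i \<in> {1..m}. ID1 (v1 i) (v2 i) * y i + ID2 (v1 i) (v2 i) * relu (y i) = relu (Con i))
       \<and> (\<forall>i \<in> {1..m}. dec (Add (Mult cID1 y) (Mult cID2 (\<lambda>j. relu (y j)))) i = relu (Con i))"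
proof -
  have slot: "ID1 (v1 i) (v2 i) * y i + ID2 (v1 i) (v2 i) * relu (y i) = relu (Con i)"
    if "i \<in> {1..m}" for i
    using polar_indicator_relu inv ydef that by simp
  moreover have "dec (Add (Mult cID1 y) (Mult cID2 (\<lambda>j. relu (y j)))) i = relu (Con i)"
    if "i \<in> {1..m}" for i
    using slot [OF that] add_hom mult_hom enc1 enc2 that by simp
  ultimately show ?thesis by blast
qed

end
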